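(* Let $(\mathcal{L},[\cdot,\cdot,\cdot]_{\mathcal{L}})$ be a (right) $3$-Leibniz algebra over a field $\mathbb{K}$ and let $\overline{\mathcal{L}}=\mathbb{K}\oplus\mathcal{L}$ with coalgebra structure $\Delta(a,x)=(a,x)\otimes(1,0)+(1,0)\otimes(0,x)$, $\varepsilon(a,x)=a$. Define the linear map $T:\overline{\mathcal{L}}^{\otimes3}\to\overline{\mathcal{L}}$ by $T((a,x),(b,y),(c,z))=(abc,\,bcx+[x,y,z]_{\mathcal{L}})$. Then $(\overline{\mathcal{L}},T)$ is a trilinear rack.
   Context: A (right) $3$-Leibniz algebra is a vector space $\mathcal{L}$ with a trilinear map $[\cdot,\cdot,\cdot]_{\mathcal{L}}$ such that $[[x_1,x_2,x_3]_{\mathcal{L}},y_1,y_2]_{\mathcal{L}}=[[x_1,y_1,y_2]_{\mathcal{L}},x_2,x_3]_{\mathcal{L}}+[x_1,[x_2,y_1,y_2]_{\mathcal{L}},x_3]_{\mathcal{L}}+[x_1,x_2,[x_3,y_1,y_2]_{\mathcal{L}}]_{\mathcal{L}}$ for all entries. $(\overline{\mathcal{L}},\Delta,\varepsilon)$ is a cocommutative coassociative counital coalgebra; Sweedler notation $\Delta(u)=u_{(1)}\otimes u_{(2)}$, $(\Delta\otimes\mathrm{Id})\Delta(u)=u_{(1)}\otimes u_{(2)}\otimes u_{(3)}$; $\overline{\mathcal{L}}^{\otimes3}$ has the tensor product coalgebra structure. A coalgebra morphism $f$ satisfies $\Delta'\circ f=(f\otimes f)\circ\Delta$, $\varepsilon'\circ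 f=\varepsilon$. A trilinear shelf is a coalgebra $\mathcal{C}$ with a coalgebra morphism $T:\mathcal{C}^{\otimes3}\to\mathcal{C}$ such that $T(T(x,y,z),u,v)=T(T(x,u_{(1)},v_{(1)}),T(y,u_{(2)},v_{(2)}),T(z,u_{(3)},v_{(3)}))$; it is a trilinear rack if there exists a trilinear shelf structure $\widetilde{T}$ on $\mathcal{C}$ with $\widetilde{T}(T(x,y_{(2)},z_{(2)}),z_{(1)},y_{(1)})=\varepsilon(y)\varepsilon(z)x=T(\widetilde{T}(x,y_{(2)},z_{(2)}),z_{(1)},y_{(1)})$ for all $x,y,z$. *)

theory Defs
  imports Main "HOL.Vector_Spaces" "HOL-Library.Product_Plus"
begin

text \<open>Elements of C (x) C, resp. C (x) C (x) C, are represented by finite lists of simple tensors;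
 two such lists denote the same tensor iff every bilinear (trilinear) form takes the same
 value on them (tensors over a field are separated by multilinear forms).\<close>

definition bilin_form :: "('k::field \<Rightarrow> 'c::ab_group_add \<Rightarrow> 'c) \<Rightarrow> ('c \<Rightarrow> 'c \<Rightarrow> 'k) \<Rightarrow> bool" where
  "bilin_form s f \<longleftrightarrow> (\<forall>x. Vector_Spaces.linear s (*) (f x)) \<and> (\<forall>y. Vector_Spaces.linear s (*) (\<lambda>x. f x y))"

definition trilin_form :: "('k::field \<Rightarrow> 'c::ab_group_add \<Rightarrow> 'c) \<Rightarrow> ('c \<Rightarrow> 'c \<Rightarrow> 'c \<Rightarrow> 'k) \<Rightarrow> bool" where
  "trilin_form s f \<longleftrightarrow> (\<forall>y z. Vector_Spaces.linear s (*) (\<lambda>x. f x y z))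
     \<and> (\<forall>x z. Vector_Spaces.linear s (*) (\<lambda>y. f x y z)) \<and> (\<forall>x y. Vector_Spaces.linear s (*) (\<lambda>z. f x y z))"

text \<open>trilinear map C x C x C \<rightarrow> C (= linear map on C (x) C (x) C)\<close>
definition trilin_map :: "('k::field \<Rightarrow> 'c::ab_group_add \<Rightarrow> 'c) \<Rightarrow> ('c \<Rightarrow> 'c \<Rightarrow> 'c \<Rightarrow> 'c) \<Rightarrow> bool" where
  "trilin_map s f \<longleftrightarrow> (\<forall>y z. Vector_Spaces.linear s s (\<lambda>x. f x y z))
     \<and> (\<forall>x z. Vector_Spaces.linear s s (\<lambda>y. f x y z)) \<and> (\<forall>x y. Vector_Spaces.linear s s (\<lambda>z. f x y z))"

definition teq2 :: "('k::field \<Rightarrow> 'c::ab_group_add \<Rightarrow> 'c) \<Rightarrow> ('c \<times> 'c) list \<Rightarrow> ('c \<times> 'c) list \<Rightarrow> bool" where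
  "teq2 s xs ys \<longleftrightarrow> (\<forall>\<beta>. bilin_form s \<beta> \<longrightarrow>
      (\<Sum>(a,b)\<leftarrow>xs. \<beta> a b) = (\<Sum>(a,b)\<leftarrow>ys. \<beta> a b))"

definition teq3 :: "('k::field \<Rightarrow> 'c::ab_group_add \<Rightarrow> 'c) \<Rightarrow> ('c \<times> 'c \<times> 'c) list \<Rightarrow> ('c \<times> 'c \<times> 'c) list \<Rightarrow> bool" where
  "teq3 s xs ys \<longleftrightarrow> (\<forall>\<tau>. trilin_form s \<tau> \<longrightarrow>
      (\<Sum>(a,b,c)\<leftarrow>xs. \<tau> a b c) = (\<Sum>(a,b,c)\<leftarrow>ys. \<tau> a b c))"

text \<open>Sweedler: Delta u = sum over the list D u; (Delta (x) Id) Delta u = sum over sweedler3 D u\<close>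
definition sweedler3 :: "('c \<Rightarrow> ('c \<times> 'c) list) \<Rightarrow> 'c \<Rightarrow> ('c \<times> 'c \<times> 'c) list" where
  "sweedler3 D u = concat (map (\<lambda>(p,c). map (\<lambda>(a,b). (a,b,c)) (D p)) (D u))"

definition sweedler3' :: "('c \<Rightarrow> ('c \<times> 'c) list) \<Rightarrow> 'c \<Rightarrow> ('c \<times> 'c \<times> 'c) list" where
  "sweedler3' D u = concat (map (\<lambda>(a,q). map (\<lambda>(b,c). (a,b,c)) (D q)) (D u))"

definition cocomm_coalgebra :: "('k::field \<Rightarrow> 'c::ab_group_add \<Rightarrow> 'c) \<Rightarrow> ('c \<Rightarrow> ('c \<times> 'c) list) \<Rightarrow> ('c \<Rightarrow> 'k) \<Rightarrow> bool" where
  "cocomm_coalgebra s D eps \<longleftrightarrow>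
     vector_space s \<and>
     Vector_Spaces.linear s (*) eps \<and>
     (\<forall>c u v. teq2 s (D (s c u + v)) (map (\<lambda>(a,b). (s c a, b)) (D u) @ D v)) \<and>
     (\<forall>u. teq3 s (sweedler3 D u) (sweedler3' D u)) \<and>
     (\<forall>u. (\<Sum>(a,b)\<leftarrow>D u. s (eps a) b) = u \<and> (\<Sum>(a,b)\<leftarrow>D u. s (eps b) a) = u) \<and>
     (\<forall>u. teq2 s (D u) (map (\<lambda>(a,b). (b,a)) (D u)))"

text \<open>T : C(x)C(x)C \<rightarrow> C (given by a trilinear map) is a coalgebra morphism for the
  tensor product coalgebra structure on C(x)C(x)C; by linearity it suffices to check on simple tensors\<close>
definition coalg_morph3 :: "('k::field \<Rightarrow> 'c::ab_group_add \<Rightarrow> 'c) \<Rightarrow> ('c \<Rightarrow> ('c \<times> 'c) list) \<Rightarrow> ('c \<Rightarrow> 'k)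
     \<Rightarrow> ('c \<Rightarrow> 'c \<Rightarrow> 'c \<Rightarrow> 'c) \<Rightarrow> bool" where
  "coalg_morph3 s D eps T \<longleftrightarrow>
     (\<forall>x y z. teq2 s (D (T x y z))
        (concat (map (\<lambda>(x1,x2). concat (map (\<lambda>(y1,y2). map (\<lambda>(z1,z2). (T x1 y1 z1, T x2 y2 z2)) (D z)) (D y))) (D x)))
      \<and> eps (T x y z) = eps x * eps y * eps z)"

definition trilinear_shelf :: "('k::field \<Rightarrow> 'c::ab_group_add \<Rightarrow> 'c) \<Rightarrow> ('c \<Rightarrow> ('c \<times> 'c) list) \<Rightarrow> ('c \<Rightarrow> 'k)
     \<Rightarrow> ('c \<Rightarrow> 'c \<Rightarrow> 'c \<Rightarrow> 'c) \<Rightarrow> bool" where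
  "trilinear_shelf s D eps T \<longleftrightarrow>
     cocomm_coalgebra s D eps \<and> trilin_map s T \<and> coalg_morph3 s D eps T \<and>
     (\<forall>x y z u v. T (T x y z) u v =
        (\<Sum>(u1,u2,u3)\<leftarrow>sweedler3 D u. \<Sum>(v1,v2,v3)\<leftarrow>sweedler3 D v.
            T (T x u1 v1) (T y u2 v2) (T z u3 v3)))"

definition trilinear_rack :: "('k::field \<Rightarrow> 'c::ab_group_add \<Rightarrow> 'c) \<Rightarrow> ('c \<Rightarrow> ('c \<times> 'c) list) \<Rightarrow> ('c \<Rightarrow> 'k)
     \<Rightarrow> ('c \<Rightarrow> 'c \<Rightarrow> 'c \<Rightarrow> 'c) \<Rightarrow> bool" where
  "trilinear_rack s D eps T \<longleftrightarrow> trilinear_shelf s D eps T \<and>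
     (\<exists>T'. trilinear_shelf s D eps T' \<and>
        (\<forall>x y z. (\<Sum>(y1,y2)\<leftarrow>D y. \<Sum>(z1,z2)\<leftarrow>D z. T' (T x y2 z2) z1 y1) = s (eps y * eps z) x
               \<and> (\<Sum>(y1,y2)\<leftarrow>D y. \<Sum>(z1,z2)\<leftarrow>D z. T (T' x y2 z2) z1 y1) = s (eps y * eps z) x))"

definition leibniz3 :: "('k::field \<Rightarrow> 'l::ab_group_add \<Rightarrow> 'l) \<Rightarrow> ('l \<Rightarrow> 'l \<Rightarrow> 'l \<Rightarrow> 'l) \<Rightarrow> bool" where
  "leibniz3 sc br \<longleftrightarrow> vector_space sc \<and> trilin_map sc br \<and>
     (\<forall>x1 x2 x3 y1 y2. br (br x1 x2 x3) y1 y2 =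
        br (br x1 y1 y2) x2 x3 + br x1 (br x2 y1 y2) x3 + br x1 x2 (br x3 y1 y2))"

definition bar_scale :: "('k::field \<Rightarrow> 'l \<Rightarrow> 'l) \<Rightarrow> 'k \<Rightarrow> 'k \<times> 'l \<Rightarrow> 'k \<times> 'l" where
  "bar_scale sc c p = (c * fst p, sc c (snd p))"

definition bar_Delta :: "('k::field \<times> 'l::zero) \<Rightarrow> (('k \<times> 'l) \<times> ('k \<times> 'l)) list" where
  "bar_Delta p = [(p, (1, 0)), ((1, 0), (0, snd p))]"

definition bar_eps :: "('k \<times> 'l) \<Rightarrow> 'k" where
  "bar_eps p = fst p"

definition bar_T :: "('k::field \<Rightarrow> 'l::ab_group_add \<Rightarrow> 'l) \<Rightarrow> ('l \<Rightarrow> 'l \<Rightarrow> 'l \<Rightarrow> 'l)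
     \<Rightarrow> 'k \<times> 'l \<Rightarrow> 'k \<times> 'l \<Rightarrow> 'k \<times> 'l \<Rightarrow> 'k \<times> 'l" where
  "bar_T sc br p q r = (fst p * fst q * fst r, sc (fst q * fst r) (snd p) + br (snd p) (snd q) (snd r))"

end

theory Submission
  imports Defs
begin

text \<open>In \<open>K \<oplus> L\<close> the element \<open>1 = (1, 0)\<close> is group-like and the elements \<open>(0, x)\<close> are
  primitive, so in every Sweedler sum the second and third arguments of \<open>T\<close> are either \<open>1\<close> or
  primitive. Since \<open>T(x, 1, 1) = x\<close>, \<open>T(x, (0, y), (0, z)) = (0, [x, y, z])\<close> and the mixed
  terms vanish, the shelf identity for \<open>T\<close> reduces in the \<open>L\<close>-component to the 3-Leibniz
  identity. The bracket \<open>[x, y, z]' = - [x, z, y]\<close> is again 3-Leibniz, and its \<open>T\<close> is the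
  inverse of \<open>T\<close>: the only correction term \<open>(0, [x, y, z])\<close> is cancelled by \<open>(0, [x, z, y]')\<close>.\<close>

lemma linear_simps:
  assumes "Vector_Spaces.linear s1 s2 f"
  shows "f (x + y) = f x + f y" "f (s1 c x) = s2 c (f x)" "f 0 = 0" "f (- x) = - f x"
  using assms unfolding linear_iff_module_hom
  by (simp_all add: module_hom.add module_hom.scale module_hom.zero module_hom.neg)

lemma bilin_form_simps:
  assumes "bilin_form s f"
  shows "f (x + x') y = f x y + f x' y" "f x (y + y') = f x y + f x y'"
    "f (s c x) y = c * f x y" "f x (s c y) = c * f x y" "f 0 y = 0" "f x 0 = 0"
proof -
  have l1: "Vector_Spaces.linear s (*) (\<lambda>x. f x y)" and l2: "Vector_Spaces.linear s (*) (f x)" for x y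
    using assms unfolding bilin_form_def by blast+
  show "f (x + x') y = f x y + f x' y" "f x (y + y') = f x y + f x y'"
    "f (s c x) y = c * f x y" "f x (s c y) = c * f x y" "f 0 y = 0" "f x 0 = 0"
    using linear_simps[OF l1] linear_simps[OF l2] by simp_all
qed

lemma trilin_form_zero:
  assumes "trilin_form s f"
  shows "f 0 y z = 0" "f x 0 z = 0" "f x y 0 = 0"
proof -
  have l1: "Vector_Spaces.linear s (*) (\<lambda>x. f x y z)"
    and l2: "Vector_Spaces.linear s (*) (\<lambda>y. f x y z)"
    and l3: "Vector_Spaces.linear s (*) (\<lambda>z. f x y z)" for x y z
    using assms unfolding trilin_form_def by blast+
  show "f 0 y z = 0" "f x 0 z = 0" "f x y 0 = 0"
    using linear_simps(3)[OF l1] linear_simps(3)[OF l2] linear_simps(3)[OF l3] by simp_all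
qed

lemma trilin_map_simps:
  assumes "trilin_map s f"
  shows "f (x + x') y z = f x y z + f x' y z"
    "f x (y + y') z = f x y z + f x y' z"
    "f x y (z + z') = f x y z + f x y z'"
    "f (s c x) y z = s c (f x y z)" "f x (s c y) z = s c (f x y z)" "f x y (s c z) = s c (f x y z)"
    "f 0 y z = 0" "f x 0 z = 0" "f x y 0 = 0"
    "f (- x) y z = - f x y z" "f x (- y) z = - f x y z" "f x y (- z) = - f x y z"
proof -
  have l1: "Vector_Spaces.linear s s (\<lambda>x. f x y z)"
    and l2: "Vector_Spaces.linear s s (\<lambda>y. f x y z)"
    and l3: "Vector_Spaces.linear s s (\<lambda>z. f x y z)" for x y z
    using assms unfolding trilin_map_def by blast+
  show "f (x + x') y z = f x y z + f x' y z"
    "f x (y + y') z = f x y z + f x y' z"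
    "f x y (z + z') = f x y z + f x y z'"
    "f (s c x) y z = s c (f x y z)" "f x (s c y) z = s c (f x y z)" "f x y (s c z) = s c (f x y z)"
    "f 0 y z = 0" "f x 0 z = 0" "f x y 0 = 0"
    "f (- x) y z = - f x y z" "f x (- y) z = - f x y z" "f x y (- z) = - f x y z"
    using linear_simps[OF l1] linear_simps[OF l2] linear_simps[OF l3] by simp_all
qed

lemma vector_space_bar_scale: "vector_space sc \<Longrightarrow> vector_space (bar_scale sc)"
  unfolding vector_space_def bar_scale_def by (auto simp: algebra_simps)

lemma bar_decompose:
  assumes "vector_space sc"
  shows "p = bar_scale sc (fst p) (1, 0) + (0, snd p)"
proof -
  interpret vector_space sc by fact
  show ?thesis by (simp add: bar_scale_def)
qed

lemma teq2_bar_Delta_linear: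
  "teq2 (bar_scale sc) (bar_Delta (bar_scale sc c u + v))
     (map (\<lambda>(a, b). (bar_scale sc c a, b)) (bar_Delta u) @ bar_Delta v)"
  unfolding teq2_def
proof (intro allI impI)
  fix \<beta> assume \<beta>: "bilin_form (bar_scale sc) \<beta>"
  have primitive: "(0, snd (bar_scale sc c u + v)) = bar_scale sc c (0, snd u) + (0, snd v)"
    by (simp add: bar_scale_def)
  show "(\<Sum>(a, b)\<leftarrow>bar_Delta (bar_scale sc c u + v). \<beta> a b) =
      (\<Sum>(a, b)\<leftarrow>map (\<lambda>(a, b). (bar_scale sc c a, b)) (bar_Delta u) @ bar_Delta v. \<beta> a b)"
    unfolding bar_Delta_def primitive by (simp add: bilin_form_simps[OF \<beta>] algebra_simps)
qed

lemma teq3_bar_Delta_coassoc: "teq3 s (sweedler3 bar_Delta u) (sweedler3' bar_Delta u)"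
  \<comment> \<open>the two lists agree up to summands with a zero tensor factor\<close>
  unfolding teq3_def sweedler3_def sweedler3'_def bar_Delta_def
  by (auto simp: zero_prod_def[symmetric] trilin_form_zero)

lemma bar_Delta_counit:
  assumes "vector_space sc"
  shows "(\<Sum>(a, b)\<leftarrow>bar_Delta u. bar_scale sc (bar_eps a) b) = u"
    "(\<Sum>(a, b)\<leftarrow>bar_Delta u. bar_scale sc (bar_eps b) a) = u"
proof -
  interpret vector_space sc by fact
  show "(\<Sum>(a, b)\<leftarrow>bar_Delta u. bar_scale sc (bar_eps a) b) = u"
    "(\<Sum>(a, b)\<leftarrow>bar_Delta u. bar_scale sc (bar_eps b) a) = u"
    by (simp_all add: bar_Delta_def bar_eps_def bar_scale_def prod_eq_iff)
qed

lemma teq2_bar_Delta_cocomm: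
  assumes "vector_space sc"
  shows "teq2 (bar_scale sc) (bar_Delta u) (map (\<lambda>(a, b). (b, a)) (bar_Delta u))"
  unfolding teq2_def
proof (intro allI impI)
  fix \<beta> assume \<beta>: "bilin_form (bar_scale sc) \<beta>"
  have "\<beta> u (1, 0) + \<beta> (1, 0) (0, snd u) = \<beta> (1, 0) u + \<beta> (0, snd u) (1, 0)"
    by (subst (1 3) bar_decompose[OF assms]) (simp add: bilin_form_simps[OF \<beta>] algebra_simps)
  then show "(\<Sum>(a, b)\<leftarrow>bar_Delta u. \<beta> a b) = (\<Sum>(a, b)\<leftarrow>map (\<lambda>(a, b). (b, a)) (bar_Delta u). \<beta> a b)"
    by (simp add: bar_Delta_def)
qed

lemma cocomm_coalgebra_bar:
  assumes "vector_space sc"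
  shows "cocomm_coalgebra (bar_scale sc) bar_Delta bar_eps"
proof -
  interpret vector_space sc by fact
  have "Vector_Spaces.linear (bar_scale sc) (*) bar_eps"
    by (simp add: linear_iff vector_space_bar_scale[OF assms] bar_eps_def bar_scale_def)
      (simp add: vector_space_def algebra_simps)
  then show ?thesis
    unfolding cocomm_coalgebra_def
    using vector_space_bar_scale[OF assms] teq2_bar_Delta_linear teq3_bar_Delta_coassoc
      bar_Delta_counit[OF assms] teq2_bar_Delta_cocomm[OF assms] by blast
qed

lemma trilin_map_bar_T:
  assumes "vector_space sc" "trilin_map sc br"
  shows "trilin_map (bar_scale sc) (bar_T sc br)"
proof -
  interpret vector_space sc by fact
  show ?thesis
    unfolding trilin_map_def
    by (simp add: linear_iff vector_space_bar_scale[OF assms(1)] trilin_map_simps[OF assms(2)]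
        bar_T_def bar_scale_def scale_right_distrib algebra_simps)
qed

lemma coalg_morph3_bar_T:
  fixes sc :: "'k::field \<Rightarrow> 'l::ab_group_add \<Rightarrow> 'l"
  assumes "vector_space sc" "trilin_map sc br"
  shows "coalg_morph3 (bar_scale sc) bar_Delta bar_eps (bar_T sc br)"
  unfolding coalg_morph3_def
proof (intro allI conjI)
  interpret vector_space sc by fact
  fix x y z :: "'k \<times> 'l"
  show "bar_eps (bar_T sc br x y z) = bar_eps x * bar_eps y * bar_eps z"
    by (simp add: bar_eps_def bar_T_def)
  show "teq2 (bar_scale sc) (bar_Delta (bar_T sc br x y z))
     (concat (map (\<lambda>(x1, x2). concat (map (\<lambda>(y1, y2). map (\<lambda>(z1, z2).
        (bar_T sc br x1 y1 z1, bar_T sc br x2 y2 z2)) (bar_Delta z)) (bar_Delta y))) (bar_Delta x)))"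
    unfolding teq2_def
  proof (intro allI impI)
    fix \<beta> assume \<beta>: "bilin_form (bar_scale sc) \<beta>"
    obtain a X b Y c Z where xyz: "x = (a, X)" "y = (b, Y)" "z = (c, Z)"
      by (cases x, cases y, cases z)
    have "(0, sc (b * c) X + br X Y Z) = bar_scale sc (b * c) (0, X) + (0, br X Y Z)"
      "(b * c, 0) = bar_scale sc (b * c) (1, 0)"
      by (simp_all add: bar_scale_def)
    then show "(\<Sum>(u, v)\<leftarrow>bar_Delta (bar_T sc br x y z). \<beta> u v) =
      (\<Sum>(u, v)\<leftarrow>concat (map (\<lambda>(x1, x2). concat (map (\<lambda>(y1, y2). map (\<lambda>(z1, z2).
        (bar_T sc br x1 y1 z1, bar_T sc br x2 y2 z2)) (bar_Delta z)) (bar_Delta y))) (bar_Delta x)). \<beta> u v)"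
      unfolding xyz
      by (simp add: bar_Delta_def bar_T_def trilin_map_simps[OF assms(2)] bilin_form_simps[OF \<beta>]
          zero_prod_def[symmetric])
  qed
qed

lemma leibniz3D:
  assumes "leibniz3 sc br"
  shows "vector_space sc" "trilin_map sc br"
    "br (br x1 x2 x3) y1 y2 =
      br (br x1 y1 y2) x2 x3 + br x1 (br x2 y1 y2) x3 + br x1 x2 (br x3 y1 y2)"
  using assms unfolding leibniz3_def by blast+

lemma bar_T_self_distrib:
  assumes "leibniz3 sc br"
  shows "bar_T sc br (bar_T sc br x y z) u v =
    (\<Sum>(u1, u2, u3)\<leftarrow>sweedler3 bar_Delta u. \<Sum>(v1, v2, v3)\<leftarrow>sweedler3 bar_Delta v.
       bar_T sc br (bar_T sc br x u1 v1) (bar_T sc br y u2 v2) (bar_T sc br z u3 v3))"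
proof -
  note br = leibniz3D(2)[OF assms] and leibniz = leibniz3D(3)[OF assms]
  interpret vector_space sc by (fact leibniz3D(1)[OF assms])
  obtain a X b Y c Z d U e V where xyzuv: "x = (a, X)" "y = (b, Y)" "z = (c, Z)" "u = (d, U)" "v = (e, V)"
    by (cases x, cases y, cases z, cases u, cases v)
  show ?thesis
    unfolding xyzuv sweedler3_def
    using leibniz[of X Y Z U V]
    by (simp add: bar_Delta_def bar_T_def trilin_map_simps[OF br] zero_prod_def[symmetric]
        scale_right_distrib algebra_simps)
qed

lemma trilinear_shelf_bar_T:
  assumes "leibniz3 sc br"
  shows "trilinear_shelf (bar_scale sc) bar_Delta bar_eps (bar_T sc br)"
  unfolding trilinear_shelf_def
  using leibniz3D(1,2)[OF assms] cocomm_coalgebra_bar trilin_map_bar_T coalg_morph3_bar_T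
    bar_T_self_distrib[OF assms]
  by blast

lemma leibniz3_neg_swap:
  assumes "leibniz3 sc br"
  shows "leibniz3 sc (\<lambda>x y z. - br x z y)"
proof -
  note br = leibniz3D(2)[OF assms] and leibniz = leibniz3D(3)[OF assms]
  interpret vector_space sc by (fact leibniz3D(1)[OF assms])
  have "trilin_map sc (\<lambda>x y z. - br x z y)"
    unfolding trilin_map_def
    by (simp add: linear_iff vector_space_axioms trilin_map_simps[OF br] scale_minus_right)
  moreover have "- br (- br x1 x3 x2) y2 y1 =
      - br (- br x1 y2 y1) x3 x2 + - br x1 x3 (- br x2 y2 y1) + - br x1 (- br x3 y2 y1) x2"
    for x1 x2 x3 y1 y2
    using leibniz[of x1 x3 x2 y2 y1] by (simp add: trilin_map_simps[OF br])
  ultimately show ?thesis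
    unfolding leibniz3_def using vector_space_axioms by blast
qed

lemma bar_T_inverse:
  assumes "vector_space sc" "trilin_map sc br" "trilin_map sc br'"
    and "\<And>x y z. br' x z y = - br x y z"
  shows "(\<Sum>(y1, y2)\<leftarrow>bar_Delta y. \<Sum>(z1, z2)\<leftarrow>bar_Delta z. bar_T sc br' (bar_T sc br x y2 z2) z1 y1)
    = bar_scale sc (bar_eps y * bar_eps z) x"
proof -
  interpret vector_space sc by fact
  obtain a X b Y c Z where xyz: "x = (a, X)" "y = (b, Y)" "z = (c, Z)"
    by (cases x, cases y, cases z)
  show ?thesis
    unfolding xyz
    by (simp add: bar_Delta_def bar_T_def bar_eps_def bar_scale_def assms(4)
        trilin_map_simps[OF assms(2)] trilin_map_simps[OF assms(3)] algebra_simps)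
qed

theorem theorem4p1:
  fixes sc :: "'k::field \<Rightarrow> 'l::ab_group_add \<Rightarrow> 'l"
    and br :: "'l \<Rightarrow> 'l \<Rightarrow> 'l \<Rightarrow> 'l"
  assumes "leibniz3 sc br"
  shows "trilinear_rack (bar_scale sc) bar_Delta bar_eps (bar_T sc br)"
proof -
  define br' where "br' x y z = - br x z y" for x y z
  have leibniz': "leibniz3 sc br'"
    unfolding br'_def by (rule leibniz3_neg_swap[OF assms])
  note vs = leibniz3D(1)[OF assms] and br = leibniz3D(2)[OF assms]
    and br' = leibniz3D(2)[OF leibniz']
  have "(\<Sum>(y1, y2)\<leftarrow>bar_Delta y. \<Sum>(z1, z2)\<leftarrow>bar_Delta z. bar_T sc br' (bar_T sc br x y2 z2) z1 y1)
      = bar_scale sc (bar_eps y * bar_eps z) x"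
    and "(\<Sum>(y1, y2)\<leftarrow>bar_Delta y. \<Sum>(z1, z2)\<leftarrow>bar_Delta z. bar_T sc br (bar_T sc br' x y2 z2) z1 y1)
      = bar_scale sc (bar_eps y * bar_eps z) x" for x y z
    by (rule bar_T_inverse[OF vs br br'], simp add: br'_def)
      (rule bar_T_inverse[OF vs br' br], simp add: br'_def)
  then show ?thesis
    unfolding trilinear_rack_def
    using trilinear_shelf_bar_T[OF assms] trilinear_shelf_bar_T[OF leibniz'] by blast
qed

end
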